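(* The Galois structure $\Gamma=(\mathsf{PreOrdGrp},\mathsf{Mono(Ab)},F,U,\mathscr{E},\mathscr{Z})$ is admissible; that is, for every preordered group $B$, every object $X$ of $\mathsf{Mono(Ab)}$ and every regular epimorphism $\phi\colon X\to F(B)$ in $\mathsf{Mono(Ab)}$, the functor $F$ sends the pullback in $\mathsf{PreOrdGrp}$ of $U(\phi)$ along the unit $\eta_B\colon B\to UF(B)$ to a pullback in $\mathsf{Mono(Ab)}$.
   Context: A preordered group is a pair $(G,P_G)$ with $G$ an additively written group and $P_G\subseteq G$ a submonoid closed under conjugation; morphisms are group homomorphisms $f$ with $f(P_G)\subseteq P_H$. This is $\mathsf{PreOrdGrp}$; limits are computed componentwise. $\mathsf{Mono(Ab)}$ is the full subcategory of $(G,P_G)$ with $G$ abelian and $P_G$ a subgroup, $U$ its inclusion, and $F$ its left adjoint: $F(G,P_G)=(G/[G,G],\{x-y: x,y\in\eta_G(P_G)\})$, $\eta_G$ the abelianization quotient, unit induced by $\eta_G$; the counit of $F\dashv U$ is an isomorphism. $\mathscr E$ (resp. $\mathscr Z$) is the class of regular epimorphisms in $\mathsf{PreOrdGrp}$ (resp. $\mathsf{Mono(Ab)}$), i.e. morphisms $(f,\bar f)$ with $f$ and its restriction $\bar f$ to positive cones both surjective. A Galois structure $(\mathscr C,\mathscr F,F,U,\mathscr E,\mathscr Z)$ is admissible when for every $B$ the counit of the induced adjunction between $\mathscr E$-extensions of $B$ and $\mathscr Z$-extensions of $F(B)$ (right adjoint: pullback of $U(\phi)$ along $\eta_B$) is an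 isomorphism; when the counit of $F\dashv U$ is an isomorphism this is equivalent to the pullback-preservation condition in the claim. *)

theory Defs
  imports "HOL-Algebra.Algebra"
begin

text \<open>Preordered groups are written multiplicatively here (HOL-Algebra groups);
  a preordered group is a pair (G, P) given as two arguments.\<close>

definition preord_group :: "('a, 'b) monoid_scheme \<Rightarrow> 'a set \<Rightarrow> bool" where
  "preord_group G P \<longleftrightarrow> group G \<and> submonoid P G \<and>
     (\<forall>g\<in>carrier G. \<forall>p\<in>P. g \<otimes>\<^bsub>G\<^esub> p \<otimes>\<^bsub>G\<^esub> inv\<^bsub>G\<^esub> g \<in> P)"

definition monoab :: "('a, 'b) monoid_scheme \<Rightarrow> 'a set \<Rightarrow> bool" where
  "monoab G P \<longleftrightarrow> preord_group G P \<and> comm_group G \<and> subgroup P G"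

definition pg_mor :: "('a, 'b) monoid_scheme \<Rightarrow> 'a set \<Rightarrow> ('c, 'd) monoid_scheme \<Rightarrow> 'c set
    \<Rightarrow> ('a \<Rightarrow> 'c) \<Rightarrow> bool" where
  "pg_mor G P H Q f \<longleftrightarrow> f \<in> hom G H \<and> f ` P \<subseteq> Q"

definition pg_regepi :: "('a, 'b) monoid_scheme \<Rightarrow> 'a set \<Rightarrow> ('c, 'd) monoid_scheme \<Rightarrow> 'c set
    \<Rightarrow> ('a \<Rightarrow> 'c) \<Rightarrow> bool" where
  "pg_regepi G P H Q f \<longleftrightarrow> pg_mor G P H Q f \<and> f ` carrier G = carrier H \<and> f ` P = Q"

definition pg_iso :: "('a, 'b) monoid_scheme \<Rightarrow> 'a set \<Rightarrow> ('c, 'd) monoid_scheme \<Rightarrow> 'c set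
    \<Rightarrow> ('a \<Rightarrow> 'c) \<Rightarrow> bool" where
  "pg_iso G P H Q f \<longleftrightarrow> f \<in> hom G H \<and> bij_betw f (carrier G) (carrier H) \<and> f ` P = Q"

definition Fobj :: "('a, 'b) monoid_scheme \<Rightarrow> 'a set monoid" where
  "Fobj G = G Mod (derived G (carrier G))"

definition Funit :: "('a, 'b) monoid_scheme \<Rightarrow> 'a \<Rightarrow> 'a set" where
  "Funit G x = r_coset G (derived G (carrier G)) x"

definition Fcone :: "('a, 'b) monoid_scheme \<Rightarrow> 'a set \<Rightarrow> 'a set set" where
  "Fcone G P = {x \<otimes>\<^bsub>Fobj G\<^esub> inv\<^bsub>Fobj G\<^esub> y | x y. x \<in> Funit G ` P \<and> y \<in> Funit G ` P}"

definition Fmor :: "('c, 'd) monoid_scheme \<Rightarrow> ('a \<Rightarrow> 'c) \<Rightarrow> 'a set \<Rightarrow> 'c set" where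
  "Fmor H f C = Funit H (f (SOME x. x \<in> C))"

definition pb :: "('a, 'b) monoid_scheme \<Rightarrow> ('c, 'd) monoid_scheme \<Rightarrow> ('a \<Rightarrow> 'z) \<Rightarrow> ('c \<Rightarrow> 'z)
    \<Rightarrow> ('a \<times> 'c) monoid" where
  "pb G H f g = (G \<times>\<times> H)\<lparr>carrier := {(b, x). b \<in> carrier G \<and> x \<in> carrier H \<and> f b = g x}\<rparr>"

definition pb_cone :: "'a set \<Rightarrow> 'c set \<Rightarrow> ('a \<Rightarrow> 'z) \<Rightarrow> ('c \<Rightarrow> 'z) \<Rightarrow> ('a \<times> 'c) set" where
  "pb_cone PB PX f g = {(b, x). b \<in> PB \<and> x \<in> PX \<and> f b = g x}"

end

theory Submission
  imports Defs
begin

(* Let P be the pullback of the unit B -> F(B) along phi.  Because phi is surjective, P maps onto B;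
   because A is abelian, every commutator of P has trivial second component.  Hence the derived
   subgroup of P is [B,B] x 1, which is precisely the kernel of p |-> (phi (snd p), snd p) from P
   onto the pullback of F(eta_B) and F(phi); so F(P) is isomorphic to that pullback.  The positive
   cones correspond because every positive element of A is the second component of a difference
   of positive elements of P. *)

lemma Funit_group_hom:
  assumes "group G"
  shows "group_hom G (Fobj G) (Funit G)"
proof -
  have "derived G (carrier G) \<lhd> G" by (rule group.derived_self_is_normal[OF assms])
  then show ?thesis
    unfolding group_hom_def group_hom_axioms_def Funit_def[abs_def] Fobj_def
    using normal.r_coset_hom_Mod normal.factorgroup_is_group assms by blast
qed

lemma carrier_Fobj: "carrier (Fobj G) = Funit G ` carrier G"
  by (simp add: Fobj_def carrier_FactGroup Funit_def[abs_def])

lemma comm_group_Fobj: "group G \<Longrightarrow> comm_group (Fobj G)"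
  unfolding Fobj_def by (rule group.derived_quot_is_comm_group)

lemma group_Fobj: "group G \<Longrightarrow> group (Fobj G)"
  using comm_group_Fobj comm_group.axioms(2) by blast

lemma mem_Funit_iff:
  assumes "group G" "x \<in> carrier G"
  shows "y \<in> Funit G x \<longleftrightarrow> y \<in> carrier G \<and> y \<otimes>\<^bsub>G\<^esub> inv\<^bsub>G\<^esub> x \<in> derived G (carrier G)"
proof -
  interpret group G by fact
  interpret D: subgroup "derived G (carrier G)" G by (rule derived_is_subgroup) simp
  show ?thesis
    using D.rcos_module[OF is_group assms(2)] D.elemrcos_carrier[OF is_group assms(2)]
    unfolding Funit_def by blast
qed

lemma Funit_eq_iff:
  assumes "group G" "x \<in> carrier G" "y \<in> carrier G"
  shows "Funit G x = Funit G y \<longleftrightarrow> x \<otimes>\<^bsub>G\<^esub> inv\<^bsub>G\<^esub> y \<in> derived G (carrier G)"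
proof -
  interpret group G by fact
  have D: "subgroup (derived G (carrier G)) G" by (rule derived_is_subgroup) simp
  have "Funit G x = Funit G y \<longleftrightarrow> x \<in> Funit G y"
    using repr_independence[OF _ assms(3) D] repr_independenceD[OF D assms(2)]
    unfolding Funit_def by metis
  then show ?thesis using mem_Funit_iff[OF assms(1,3)] assms(2) by blast
qed

lemma Funit_comm_group:
  assumes "comm_group G" "x \<in> carrier G"
  shows "Funit G x = {x}"
proof -
  interpret comm_group G by fact
  have "derived G (carrier G) = {\<one>\<^bsub>G\<^esub>}" by (rule derived_eq_singleton) simp
  then show ?thesis using assms(2) by (simp add: Funit_def r_coset_def)
qed

lemma (in group_hom) derived_image_subset:
  "h ` derived G (carrier G) \<subseteq> derived H (carrier H)"
proof -
  have "h ` carrier G \<subseteq> carrier H" by auto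
  then show ?thesis using derived_img[of "carrier G"] H.mono_derived by blast
qed

lemma Fmor_Funit:
  assumes "group_hom G H h" "x \<in> carrier G"
  shows "Fmor H h (Funit G x) = Funit H (h x)"
proof -
  interpret group_hom G H h by fact
  define q where "q = (SOME q. q \<in> Funit G x)"
  have "x \<in> Funit G x" using mem_Funit_iff[OF G.is_group assms(2)] assms(2)
    by (simp add: G.derived_is_subgroup subgroup.one_closed)
  then have "q \<in> Funit G x" unfolding q_def by (rule someI)
  then have q: "q \<in> carrier G" "q \<otimes>\<^bsub>G\<^esub> inv\<^bsub>G\<^esub> x \<in> derived G (carrier G)"
    using mem_Funit_iff[OF G.is_group assms(2)] by auto
  then have "h q \<otimes>\<^bsub>H\<^esub> inv\<^bsub>H\<^esub> h x \<in> derived H (carrier H)"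
    using derived_image_subset assms(2) by auto
  then show ?thesis
    using Funit_eq_iff[OF H.is_group] q(1) assms(2) by (simp add: Fmor_def q_def)
qed

lemma Fcone_eq:
  assumes "group G" "P \<subseteq> carrier G"
  shows "Fcone G P = {Funit G (x \<otimes>\<^bsub>G\<^esub> inv\<^bsub>G\<^esub> y) | x y. x \<in> P \<and> y \<in> P}"
proof -
  interpret group_hom G "Fobj G" "Funit G" by (rule Funit_group_hom[OF assms(1)])
  have "Funit G (x \<otimes>\<^bsub>G\<^esub> inv\<^bsub>G\<^esub> y) = Funit G x \<otimes>\<^bsub>Fobj G\<^esub> inv\<^bsub>Fobj G\<^esub> Funit G y"
    if "x \<in> P" "y \<in> P" for x y
  proof -
    have "x \<in> carrier G" "y \<in> carrier G" using that assms(2) by auto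
    then show ?thesis by (simp add: hom_mult)
  qed
  then show ?thesis unfolding Fcone_def by blast
qed

lemma Fcone_comm_group_subgroup:
  assumes "comm_group G" "subgroup P G"
  shows "Fcone G P = (\<lambda>x. {x}) ` P"
proof -
  interpret comm_group G by fact
  interpret P: subgroup P G by fact
  have singleton: "Funit G (x \<otimes>\<^bsub>G\<^esub> inv\<^bsub>G\<^esub> y) = {x \<otimes>\<^bsub>G\<^esub> inv\<^bsub>G\<^esub> y}" if "x \<in> P" "y \<in> P" for x y
    using that P.subset by (intro Funit_comm_group[OF assms(1)]) auto
  have "(\<lambda>x. {x}) ` P \<subseteq> {Funit G (x \<otimes>\<^bsub>G\<^esub> inv\<^bsub>G\<^esub> y) | x y. x \<in> P \<and> y \<in> P}"
  proof
    fix E assume "E \<in> (\<lambda>x. {x}) ` P"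
    then obtain a where a: "a \<in> P" "E = {a}" by blast
    then have "E = Funit G (a \<otimes>\<^bsub>G\<^esub> inv\<^bsub>G\<^esub> \<one>\<^bsub>G\<^esub>)"
      using singleton[of a "\<one>\<^bsub>G\<^esub>"] P.one_closed by simp
    with a(1) P.one_closed show "E \<in> {Funit G (x \<otimes>\<^bsub>G\<^esub> inv\<^bsub>G\<^esub> y) | x y. x \<in> P \<and> y \<in> P}" by blast
  qed
  moreover have "{Funit G (x \<otimes>\<^bsub>G\<^esub> inv\<^bsub>G\<^esub> y) | x y. x \<in> P \<and> y \<in> P} \<subseteq> (\<lambda>x. {x}) ` P"
  proof
    fix E assume "E \<in> {Funit G (x \<otimes>\<^bsub>G\<^esub> inv\<^bsub>G\<^esub> y) | x y. x \<in> P \<and> y \<in> P}"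
    then obtain x y where xy: "x \<in> P" "y \<in> P" "E = Funit G (x \<otimes>\<^bsub>G\<^esub> inv\<^bsub>G\<^esub> y)"
      by blast
    then have "E = {x \<otimes>\<^bsub>G\<^esub> inv\<^bsub>G\<^esub> y}" by (simp add: singleton)
    then show "E \<in> (\<lambda>x. {x}) ` P" using xy(1,2) by (simp add: P.m_closed P.m_inv_closed)
  qed
  ultimately show ?thesis
    unfolding Fcone_eq[OF is_group P.subset] by (rule equalityI[rotated])
qed

lemma Fobj_hom_factor:
  assumes "group G" "group H" "\<chi> \<in> hom G H"
    and \<psi>: "\<And>x. x \<in> carrier G \<Longrightarrow> \<psi> (Funit G x) = \<chi> x"
  shows "\<psi> \<in> hom (Fobj G) H"
proof -
  interpret \<chi>: group_hom G H \<chi> using assms(1-3) by (simp add: group_hom_def group_hom_axioms_def)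
  interpret group_hom G "Fobj G" "Funit G" by (rule Funit_group_hom[OF assms(1)])
  show ?thesis
  proof (rule homI)
    fix c assume "c \<in> carrier (Fobj G)"
    then obtain x where "x \<in> carrier G" "c = Funit G x" by (auto simp: carrier_Fobj)
    then show "\<psi> c \<in> carrier H" by (simp add: \<psi>)
  next
    fix c d assume "c \<in> carrier (Fobj G)" "d \<in> carrier (Fobj G)"
    then obtain x y where xy: "x \<in> carrier G" "y \<in> carrier G" "c = Funit G x" "d = Funit G y"
      by (auto simp: carrier_Fobj)
    then have "\<psi> (c \<otimes>\<^bsub>Fobj G\<^esub> d) = \<psi> (Funit G (x \<otimes>\<^bsub>G\<^esub> y))" by simp
    also have "\<dots> = \<chi> (x \<otimes>\<^bsub>G\<^esub> y)" by (rule \<psi>) (simp add: xy)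
    also have "\<dots> = \<psi> c \<otimes>\<^bsub>H\<^esub> \<psi> d" using xy by (simp add: \<psi>)
    finally show "\<psi> (c \<otimes>\<^bsub>Fobj G\<^esub> d) = \<psi> c \<otimes>\<^bsub>H\<^esub> \<psi> d" .
  qed
qed

lemma Fobj_inj_factor:
  assumes "group G" "group H" "\<chi> \<in> hom G H" "kernel G H \<chi> \<subseteq> derived G (carrier G)"
    and \<psi>: "\<And>x. x \<in> carrier G \<Longrightarrow> \<psi> (Funit G x) = \<chi> x"
  shows "inj_on \<psi> (carrier (Fobj G))"
proof (rule inj_onI)
  interpret group_hom G H \<chi> using assms(1-3) by (simp add: group_hom_def group_hom_axioms_def)
  fix c d assume "c \<in> carrier (Fobj G)" "d \<in> carrier (Fobj G)" "\<psi> c = \<psi> d"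
  then obtain x y where xy: "x \<in> carrier G" "y \<in> carrier G" "c = Funit G x" "d = Funit G y"
    and "\<chi> x = \<chi> y"
    by (force simp: carrier_Fobj \<psi>)
  then have "x \<otimes>\<^bsub>G\<^esub> inv\<^bsub>G\<^esub> y \<in> kernel G H \<chi>"
    by (simp add: kernel_def)
  then have "x \<otimes>\<^bsub>G\<^esub> inv\<^bsub>G\<^esub> y \<in> derived G (carrier G)" using assms(4) by blast
  then show "c = d"
    using Funit_eq_iff[OF assms(1) xy(1,2)] xy(3,4) by simp
qed

lemma group_hom_Fmor:
  assumes "group_hom G H h"
  shows "group_hom (Fobj G) (Fobj H) (Fmor H h)"
proof -
  interpret group_hom G H h by fact
  have "Funit H \<in> hom H (Fobj H)"
    using Funit_group_hom[OF H.is_group] by (simp add: group_hom_def group_hom_axioms_def)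
  then have "(\<lambda>x. Funit H (h x)) \<in> hom G (Fobj H)"
    using Group.hom_compose[OF homh] by (simp add: comp_def)
  then have "Fmor H h \<in> hom (Fobj G) (Fobj H)"
    using Fmor_Funit[OF assms]
    by (intro Fobj_hom_factor[OF G.is_group group_Fobj[OF H.is_group]]) simp_all
  then show ?thesis
    using group_Fobj[OF G.is_group] group_Fobj[OF H.is_group]
    by (simp add: group_hom_def group_hom_axioms_def)
qed

lemma carrier_pb:
  "carrier (pb G H f g) = {(x, y). x \<in> carrier G \<and> y \<in> carrier H \<and> f x = g y}"
  by (simp add: pb_def)

lemma mult_pb: "p \<otimes>\<^bsub>pb G H f g\<^esub> q = (fst p \<otimes>\<^bsub>G\<^esub> fst q, snd p \<otimes>\<^bsub>H\<^esub> snd q)"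
  by (simp add: pb_def mult_DirProd')

lemma one_pb: "\<one>\<^bsub>pb G H f g\<^esub> = (\<one>\<^bsub>G\<^esub>, \<one>\<^bsub>H\<^esub>)"
  by (simp add: pb_def)

lemma subgroup_pb:
  assumes "group_hom G Z f" "group_hom H Z g"
  shows "subgroup (carrier (pb G H f g)) (G \<times>\<times> H)"
proof -
  interpret f: group_hom G Z f by fact
  interpret g: group_hom H Z g by fact
  show ?thesis
    by (rule subgroup.intro)
      (auto simp: carrier_pb mult_DirProd' inv_DirProd[OF f.G.is_group g.G.is_group])
qed

lemma group_pb:
  assumes "group_hom G Z f" "group_hom H Z g"
  shows "group (pb G H f g)"
proof -
  have "group (G \<times>\<times> H)"
    using assms by (intro DirProd_group) (simp_all add: group_hom_def)
  then show ?thesis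
    using subgroup.subgroup_is_group[OF subgroup_pb[OF assms]] by (simp add: pb_def)
qed

lemma group_hom_fst_pb:
  assumes "group_hom G Z f" "group_hom H Z g"
  shows "group_hom (pb G H f g) G fst"
  using group_pb[OF assms] assms
  by (auto simp: group_hom_def group_hom_axioms_def hom_def carrier_pb mult_pb)

lemma group_hom_snd_pb:
  assumes "group_hom G Z f" "group_hom H Z g"
  shows "group_hom (pb G H f g) H snd"
  using group_pb[OF assms] assms
  by (auto simp: group_hom_def group_hom_axioms_def hom_def carrier_pb mult_pb)

lemma derived_pb:
  assumes "group_hom G Z f" "group_hom H Z g" "comm_group H"
    and fst_surj: "fst ` carrier (pb G H f g) = carrier G"
  shows "derived (pb G H f g) (carrier (pb G H f g)) = (\<lambda>x. (x, \<one>\<^bsub>H\<^esub>)) ` derived G (carrier G)"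
    (is "?D = _")
proof -
  interpret fst: group_hom "pb G H f g" G fst by (rule group_hom_fst_pb[OF assms(1,2)])
  interpret snd: group_hom "pb G H f g" H snd by (rule group_hom_snd_pb[OF assms(1,2)])
  have fst_D: "fst ` ?D = derived G (carrier G)"
    using fst.derived_img[of "carrier (pb G H f g)"] fst_surj by simp
  have "snd ` ?D = derived H (snd ` carrier (pb G H f g))"
    using snd.derived_img[of "carrier (pb G H f g)"] by simp
  also have "\<dots> = {\<one>\<^bsub>H\<^esub>}"
    by (rule comm_group.derived_eq_singleton[OF assms(3)]) (auto simp: carrier_pb)
  finally have snd_D: "snd ` ?D = {\<one>\<^bsub>H\<^esub>}" .
  show ?thesis
  proof
    show "?D \<subseteq> (\<lambda>x. (x, \<one>\<^bsub>H\<^esub>)) ` derived G (carrier G)"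
    proof
      fix p assume "p \<in> ?D"
      then have "fst p \<in> derived G (carrier G)" "snd p = \<one>\<^bsub>H\<^esub>" using fst_D snd_D by blast+
      then show "p \<in> (\<lambda>x. (x, \<one>\<^bsub>H\<^esub>)) ` derived G (carrier G)" by (metis image_eqI prod.collapse)
    qed
    show "(\<lambda>x. (x, \<one>\<^bsub>H\<^esub>)) ` derived G (carrier G) \<subseteq> ?D"
    proof
      fix p assume "p \<in> (\<lambda>x. (x, \<one>\<^bsub>H\<^esub>)) ` derived G (carrier G)"
      then obtain x where x: "x \<in> fst ` ?D" "p = (x, \<one>\<^bsub>H\<^esub>)" using fst_D by blast
      then obtain q where q: "q \<in> ?D" "fst q = x" by blast
      then have "snd q = \<one>\<^bsub>H\<^esub>" using snd_D by blast
      then have "p = q" using q(2) x(2) by (simp add: prod_eq_iff)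
      then show "p \<in> ?D" using q(1) by simp
    qed
  qed
qed

locale abelian_pullback =
  fixes B :: "('a, 'm) monoid_scheme" and A :: "('c, 'n) monoid_scheme" and \<phi> :: "'c \<Rightarrow> 'a set"
  assumes group_B: "group B" and comm_group_A: "comm_group A"
    and \<phi>_hom: "\<phi> \<in> hom A (Fobj B)" and \<phi>_surj: "\<phi> ` carrier A = carrier (Fobj B)"
begin

abbreviation "P \<equiv> pb B A (Funit B) \<phi>"
abbreviation "T \<equiv> pb (Fobj B) (Fobj A) (Fmor (Fobj B) (Funit B)) (Fmor (Fobj B) \<phi>)"
abbreviation "\<chi> p \<equiv> (\<phi> (snd p), {snd p})"
abbreviation "\<psi> c \<equiv> (Fmor B fst c, Fmor A snd c)"

lemma group_A: "group A"
  using comm_group_A by (rule comm_group.axioms(2))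

lemma group_hom_Funit_B: "group_hom B (Fobj B) (Funit B)"
  by (rule Funit_group_hom[OF group_B])

lemma group_hom_\<phi>: "group_hom A (Fobj B) \<phi>"
  using group_A group_Fobj[OF group_B] \<phi>_hom by (simp add: group_hom_def group_hom_axioms_def)

lemma group_P: "group P"
  by (rule group_pb[OF group_hom_Funit_B group_hom_\<phi>])

lemma fst_P_surj: "fst ` carrier P = carrier B"
proof
  show "carrier B \<subseteq> fst ` carrier P"
  proof
    fix b assume b: "b \<in> carrier B"
    then have "Funit B b \<in> \<phi> ` carrier A" using \<phi>_surj by (simp add: carrier_Fobj)
    then obtain a where "a \<in> carrier A" "\<phi> a = Funit B b" by blast
    then have "(b, a) \<in> carrier P" using b by (simp add: carrier_pb)
    then show "b \<in> fst ` carrier P" by force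
  qed
qed (auto simp: carrier_pb)

lemma derived_P: "derived P (carrier P) = (\<lambda>x. (x, \<one>\<^bsub>A\<^esub>)) ` derived B (carrier B)"
  by (rule derived_pb[OF group_hom_Funit_B group_hom_\<phi> comm_group_A fst_P_surj])

lemma Fmor_pb_Funit:
  assumes "p \<in> carrier P"
  shows "\<psi> (Funit P p) = \<chi> p"
proof -
  have "Fmor B fst (Funit P p) = Funit B (fst p)"
    by (rule Fmor_Funit[OF group_hom_fst_pb[OF group_hom_Funit_B group_hom_\<phi>] assms])
  moreover have "Fmor A snd (Funit P p) = Funit A (snd p)"
    by (rule Fmor_Funit[OF group_hom_snd_pb[OF group_hom_Funit_B group_hom_\<phi>] assms])
  ultimately show ?thesis
    using assms Funit_comm_group[OF comm_group_A] by (auto simp: carrier_pb)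
qed

lemma carrier_Fobj_A: "carrier (Fobj A) = (\<lambda>a. {a}) ` carrier A"
  using Funit_comm_group[OF comm_group_A] by (simp add: carrier_Fobj)

lemma carrier_T: "carrier T = (\<lambda>a. (\<phi> a, {a})) ` carrier A"
proof -
  interpret \<phi>: group_hom A "Fobj B" \<phi> by (rule group_hom_\<phi>)
  have comm_FB: "comm_group (Fobj B)" by (rule comm_group_Fobj[OF group_B])
  have Fmor_Funit_B: "Fmor (Fobj B) (Funit B) C = {C}" if C: "C \<in> carrier (Fobj B)" for C
  proof -
    obtain b where "b \<in> carrier B" "C = Funit B b" using C unfolding carrier_Fobj by blast
    then show ?thesis
      using Fmor_Funit[OF group_hom_Funit_B] Funit_comm_group[OF comm_FB] C by simp
  qed
  have Fmor_\<phi>: "Fmor (Fobj B) \<phi> {a} = {\<phi> a}" if "a \<in> carrier A" for a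
    using Fmor_Funit[OF group_hom_\<phi> that] Funit_comm_group[OF comm_group_A that]
      Funit_comm_group[OF comm_FB] that by simp
  show ?thesis
  proof
    show "carrier T \<subseteq> (\<lambda>a. (\<phi> a, {a})) ` carrier A"
    proof
      fix t assume "t \<in> carrier T"
      then obtain C a where t: "t = (C, {a})" "C \<in> carrier (Fobj B)" "a \<in> carrier A"
        and "Fmor (Fobj B) (Funit B) C = Fmor (Fobj B) \<phi> {a}"
        by (auto simp: carrier_pb carrier_Fobj_A)
      then have "C = \<phi> a" using Fmor_Funit_B Fmor_\<phi> by simp
      then show "t \<in> (\<lambda>a. (\<phi> a, {a})) ` carrier A" using t by blast
    qed
    show "(\<lambda>a. (\<phi> a, {a})) ` carrier A \<subseteq> carrier T"
      using Fmor_Funit_B Fmor_\<phi> by (auto simp: carrier_pb carrier_Fobj_A)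
  qed
qed

lemma \<chi>_hom: "(\<lambda>p. \<chi> p) \<in> hom P T"
proof (rule homI)
  fix p assume "p \<in> carrier P"
  then show "\<chi> p \<in> carrier T" unfolding carrier_T by (auto simp: carrier_pb[of B A])
next
  interpret \<phi>: group_hom A "Fobj B" \<phi> by (rule group_hom_\<phi>)
  interpret Funit_A: group_hom A "Fobj A" "Funit A" by (rule Funit_group_hom[OF group_A])
  fix p q assume "p \<in> carrier P" "q \<in> carrier P"
  then have pq: "snd p \<in> carrier A" "snd q \<in> carrier A" by (auto simp: carrier_pb)
  have "{snd p \<otimes>\<^bsub>A\<^esub> snd q} = {snd p} \<otimes>\<^bsub>Fobj A\<^esub> {snd q}"
    using Funit_A.hom_mult[OF pq] Funit_comm_group[OF comm_group_A] pq by simp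
  then show "\<chi> (p \<otimes>\<^bsub>P\<^esub> q) = \<chi> p \<otimes>\<^bsub>T\<^esub> \<chi> q"
    using pq by (simp add: mult_pb)
qed

lemma \<chi>_image: "(\<lambda>p. \<chi> p) ` carrier P = carrier T"
proof
  show "carrier T \<subseteq> (\<lambda>p. \<chi> p) ` carrier P"
  proof
    fix t assume "t \<in> carrier T"
    then obtain a where a: "a \<in> carrier A" "t = (\<phi> a, {a})" by (auto simp: carrier_T)
    then have "\<phi> a \<in> Funit B ` carrier B" using \<phi>_surj by (auto simp: carrier_Fobj)
    then obtain b where "b \<in> carrier B" "Funit B b = \<phi> a" by auto
    then have "(b, a) \<in> carrier P" using a(1) by (simp add: carrier_pb)
    then show "t \<in> (\<lambda>p. \<chi> p) ` carrier P" using a(2) by force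
  qed
qed (use \<chi>_hom in \<open>auto simp: hom_def\<close>)

lemma \<chi>_kernel: "kernel P T (\<lambda>p. \<chi> p) \<subseteq> derived P (carrier P)"
proof
  interpret Funit_B: group_hom B "Fobj B" "Funit B" by (rule group_hom_Funit_B)
  interpret Funit_A: group_hom A "Fobj A" "Funit A" by (rule Funit_group_hom[OF group_A])
  fix p assume "p \<in> kernel P T (\<lambda>p. \<chi> p)"
  then have p: "p \<in> carrier P" "\<phi> (snd p) = \<one>\<^bsub>Fobj B\<^esub>" "{snd p} = \<one>\<^bsub>Fobj A\<^esub>"
    by (auto simp: kernel_def one_pb)
  have "{snd p} = {\<one>\<^bsub>A\<^esub>}"
    using p(3) Funit_A.hom_one Funit_comm_group[OF comm_group_A, of "\<one>\<^bsub>A\<^esub>"] by simp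
  then have snd_p: "snd p = \<one>\<^bsub>A\<^esub>" by simp
  have fst_p: "fst p \<in> carrier B" "Funit B (fst p) = \<phi> (snd p)" using p(1) by (auto simp: carrier_pb)
  then have "Funit B (fst p) = Funit B \<one>\<^bsub>B\<^esub>" using p(2) by simp
  then have "fst p \<otimes>\<^bsub>B\<^esub> inv\<^bsub>B\<^esub> \<one>\<^bsub>B\<^esub> \<in> derived B (carrier B)"
    using Funit_eq_iff[OF group_B fst_p(1) Funit_B.G.one_closed] by blast
  then have "fst p \<in> derived B (carrier B)" using fst_p(1) by simp
  then show "p \<in> derived P (carrier P)"
    using snd_p derived_P by (simp add: image_iff prod_eq_iff)
qed

theorem Fobj_P_iso_T:
  shows "(\<lambda>c. \<psi> c) \<in> hom (Fobj P) T" and "bij_betw (\<lambda>c. \<psi> c) (carrier (Fobj P)) (carrier T)"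
proof -
  have group_T: "group T"
    by (rule group_pb[OF group_hom_Fmor[OF group_hom_Funit_B] group_hom_Fmor[OF group_hom_\<phi>]])
  show "(\<lambda>c. \<psi> c) \<in> hom (Fobj P) T"
    by (rule Fobj_hom_factor[OF group_P group_T \<chi>_hom Fmor_pb_Funit])
  have "(\<lambda>c. \<psi> c) ` carrier (Fobj P) = carrier T"
    unfolding carrier_Fobj \<chi>_image[symmetric] image_image using Fmor_pb_Funit by simp
  then show "bij_betw (\<lambda>c. \<psi> c) (carrier (Fobj P)) (carrier T)"
    using Fobj_inj_factor[OF group_P group_T \<chi>_hom \<chi>_kernel Fmor_pb_Funit] by (simp add: bij_betw_def)
qed

end

locale abelian_pullback_cones = abelian_pullback +
  fixes PB :: "'a set" and PA :: "'c set"
  assumes submonoid_PB: "submonoid PB B" and subgroup_PA: "subgroup PA A"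
    and \<phi>_cone: "\<phi> ` PA = Fcone B PB"
begin

abbreviation "PP \<equiv> pb_cone PB PA (Funit B) \<phi>"

lemma PB_subset: "PB \<subseteq> carrier B"
  by (rule submonoid.subset[OF submonoid_PB])

lemma PA_subset: "PA \<subseteq> carrier A"
  by (rule subgroup.subset[OF subgroup_PA])

lemma PP_subset: "PP \<subseteq> carrier P"
  using PB_subset PA_subset by (auto simp: pb_cone_def carrier_pb)

lemma pb_cone_T:
  "pb_cone (Fcone B PB) (Fcone A PA) (Fmor (Fobj B) (Funit B)) (Fmor (Fobj B) \<phi>) = (\<lambda>a. (\<phi> a, {a})) ` PA"
proof -
  have "Fcone B PB \<subseteq> carrier (Fobj B)"
    unfolding \<phi>_cone[symmetric] using PA_subset group_hom.hom_closed[OF group_hom_\<phi>] by auto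
  moreover have Fcone_A: "Fcone A PA = (\<lambda>a. {a}) ` PA"
    by (rule Fcone_comm_group_subgroup[OF comm_group_A subgroup_PA])
  ultimately have "pb_cone (Fcone B PB) (Fcone A PA) (Fmor (Fobj B) (Funit B)) (Fmor (Fobj B) \<phi>)
      = carrier T \<inter> (Fcone B PB \<times> Fcone A PA)"
    using PA_subset by (auto simp: pb_cone_def carrier_pb carrier_Fobj_A)
  also have "\<dots> = (\<lambda>a. (\<phi> a, {a})) ` PA"
    unfolding carrier_T Fcone_A \<phi>_cone[symmetric] using PA_subset by auto
  finally show ?thesis .
qed

text \<open>Given a positive a, write its image as the class of x y^-1 with x, y positive in B and pick a
  positive a' with image the class of y; then (x, a a') and (y, a') are positive in the pullback.\<close>

lemma snd_pb_cone_quotients: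
  "{snd (p \<otimes>\<^bsub>P\<^esub> inv\<^bsub>P\<^esub> q) | p q. p \<in> PP \<and> q \<in> PP} = PA"
proof
  interpret snd: group_hom P A snd by (rule group_hom_snd_pb[OF group_hom_Funit_B group_hom_\<phi>])
  interpret PA: subgroup PA A by (rule subgroup_PA)
  have "snd (p \<otimes>\<^bsub>P\<^esub> inv\<^bsub>P\<^esub> q) \<in> PA" if pq: "p \<in> PP" "q \<in> PP" for p q
  proof -
    have "p \<in> carrier P" "q \<in> carrier P" using pq PP_subset by auto
    then have "snd (p \<otimes>\<^bsub>P\<^esub> inv\<^bsub>P\<^esub> q) = snd p \<otimes>\<^bsub>A\<^esub> inv\<^bsub>A\<^esub> snd q" by simp
    moreover have "snd p \<in> PA" "snd q \<in> PA" using pq by (auto simp: pb_cone_def)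
    ultimately show ?thesis by simp
  qed
  then show "{snd (p \<otimes>\<^bsub>P\<^esub> inv\<^bsub>P\<^esub> q) | p q. p \<in> PP \<and> q \<in> PP} \<subseteq> PA" by blast
  show "PA \<subseteq> {snd (p \<otimes>\<^bsub>P\<^esub> inv\<^bsub>P\<^esub> q) | p q. p \<in> PP \<and> q \<in> PP}"
  proof
    interpret Funit_B: group_hom B "Fobj B" "Funit B" by (rule group_hom_Funit_B)
    interpret \<phi>: group_hom A "Fobj B" \<phi> by (rule group_hom_\<phi>)
    have Fcone_B: "Fcone B PB = {Funit B (x \<otimes>\<^bsub>B\<^esub> inv\<^bsub>B\<^esub> y) | x y. x \<in> PB \<and> y \<in> PB}"
      by (rule Fcone_eq[OF group_B PB_subset])
    fix a assume a: "a \<in> PA"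
    then have "\<phi> a \<in> Fcone B PB" using \<phi>_cone by blast
    then obtain x y where xy: "x \<in> PB" "y \<in> PB" "\<phi> a = Funit B (x \<otimes>\<^bsub>B\<^esub> inv\<^bsub>B\<^esub> y)"
      unfolding Fcone_B by blast
    have "Funit B y = Funit B (y \<otimes>\<^bsub>B\<^esub> inv\<^bsub>B\<^esub> \<one>\<^bsub>B\<^esub>)" using xy(2) PB_subset by auto
    then have "Funit B y \<in> \<phi> ` PA"
      unfolding \<phi>_cone Fcone_B using xy(2) submonoid.one_closed[OF submonoid_PB] by blast
    then obtain a' where a': "a' \<in> PA" "\<phi> a' = Funit B y" by blast
    have xy_carrier: "x \<in> carrier B" "y \<in> carrier B" using xy PB_subset by auto
    have a_carrier: "a \<in> carrier A" "a' \<in> carrier A" using a a' PA_subset by auto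
    have "\<phi> (a \<otimes>\<^bsub>A\<^esub> a') = Funit B (x \<otimes>\<^bsub>B\<^esub> inv\<^bsub>B\<^esub> y) \<otimes>\<^bsub>Fobj B\<^esub> Funit B y"
      using a_carrier xy(3) a'(2) by simp
    also have "\<dots> = Funit B (x \<otimes>\<^bsub>B\<^esub> inv\<^bsub>B\<^esub> y \<otimes>\<^bsub>B\<^esub> y)"
      using xy_carrier by simp
    also have "\<dots> = Funit B x"
      using xy_carrier by (simp add: Funit_B.G.m_assoc)
    finally have p: "(x, a \<otimes>\<^bsub>A\<^esub> a') \<in> PP"
      using xy a a' by (simp add: pb_cone_def PA.m_closed)
    have q: "(y, a') \<in> PP" using xy a' by (simp add: pb_cone_def)
    have "(x, a \<otimes>\<^bsub>A\<^esub> a') \<in> carrier P" "(y, a') \<in> carrier P" using p q PP_subset by auto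
    then have "snd ((x, a \<otimes>\<^bsub>A\<^esub> a') \<otimes>\<^bsub>P\<^esub> inv\<^bsub>P\<^esub> (y, a')) = a \<otimes>\<^bsub>A\<^esub> a' \<otimes>\<^bsub>A\<^esub> inv\<^bsub>A\<^esub> a'"
      by simp
    also have "\<dots> = a" using a_carrier by (simp add: snd.H.m_assoc)
    finally have "a = snd ((x, a \<otimes>\<^bsub>A\<^esub> a') \<otimes>\<^bsub>P\<^esub> inv\<^bsub>P\<^esub> (y, a'))" by (rule sym)
    then show "a \<in> {snd (p \<otimes>\<^bsub>P\<^esub> inv\<^bsub>P\<^esub> q) | p q. p \<in> PP \<and> q \<in> PP}"
      using p q by blast
  qed
qed

theorem Fcone_P_image:
  "(\<lambda>c. \<psi> c) ` Fcone P PP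
    = pb_cone (Fcone B PB) (Fcone A PA) (Fmor (Fobj B) (Funit B)) (Fmor (Fobj B) \<phi>)"
proof -
  interpret P: group P by (rule group_P)
  define Q where "Q = {p \<otimes>\<^bsub>P\<^esub> inv\<^bsub>P\<^esub> q | p q. p \<in> PP \<and> q \<in> PP}"
  have Q_subset: "Q \<subseteq> carrier P"
    unfolding Q_def using PP_subset by (blast intro: P.m_closed P.inv_closed)
  have Fcone_P: "Fcone P PP = Funit P ` Q"
    unfolding Fcone_eq[OF group_P PP_subset] Q_def by blast
  have "(\<lambda>c. \<psi> c) ` Fcone P PP = (\<lambda>p. \<chi> p) ` Q"
    unfolding Fcone_P image_image using Q_subset by (intro image_cong refl Fmor_pb_Funit) blast
  also have "\<dots> = (\<lambda>a. (\<phi> a, {a})) ` {snd (p \<otimes>\<^bsub>P\<^esub> inv\<^bsub>P\<^esub> q) | p q. p \<in> PP \<and> q \<in> PP}"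
    unfolding Q_def by blast
  finally show ?thesis
    unfolding snd_pb_cone_quotients pb_cone_T .
qed

end

theorem corollary5p5:
  fixes B :: "('a, 'm) monoid_scheme" and PB :: "'a set"
    and A :: "('c, 'n) monoid_scheme" and PA :: "'c set"
    and \<phi> :: "'c \<Rightarrow> 'a set"
  assumes B: "preord_group B PB"
    and A: "monoab A PA"
    and \<phi>: "pg_regepi A PA (Fobj B) (Fcone B PB) \<phi>"
  shows "pg_iso
           (Fobj (pb B A (Funit B) \<phi>)) (Fcone (pb B A (Funit B) \<phi>) (pb_cone PB PA (Funit B) \<phi>))
           (pb (Fobj B) (Fobj A) (Fmor (Fobj B) (Funit B)) (Fmor (Fobj B) \<phi>))
           (pb_cone (Fcone B PB) (Fcone A PA) (Fmor (Fobj B) (Funit B)) (Fmor (Fobj B) \<phi>))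
           (\<lambda>c. (Fmor B fst c, Fmor A snd c))"
proof -
  have "abelian_pullback_cones B A \<phi> PB PA"
    using B A \<phi>
    by (auto simp: abelian_pullback_cones_def abelian_pullback_cones_axioms_def abelian_pullback_def
        preord_group_def monoab_def pg_regepi_def pg_mor_def)
  then interpret abelian_pullback_cones B A \<phi> PB PA .
  show ?thesis
    unfolding pg_iso_def using Fobj_P_iso_T Fcone_P_image by blast
qed

end
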